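(* Let $V$ be a finite-dimensional vector space over an algebraically closed field $\mathbf{k}$ of characteristic $p$, of dimension $\mathbf{n}\ge3$, equipped with a bilinear form $(,)$ and a quadratic form $Q$ such that either (i) $Q=0$, $(x,x)=0$ for all $x$, and $V^\perp=0$; or (ii) $Q\ne0$, $(x,y)=Q(x+y)-Q(x)-Q(y)$ for all $x,y$, and $Q|_{V^\perp}$ is injective. Let $\kappa\in\{0,1\}$ with $\mathbf{n}-\kappa$ even, $n=(\mathbf{n}-\kappa)/2$. Let $p_1\ge p_2\ge\dots\ge p_\sigma\ge1$ be integers with $p_1+\dots+p_\sigma=n$, and if $\kappa=1$ set $p_{\sigma+1}=1/2$. Let $g\in Is(V)$ and let $(w^t_i)_{t\in[1,\sigma+\kappa],i\in\mathbb{Z}}$ be a $(g,p_* )$-adapted collection. Then $\{w^x_i;\ x\in[1,\sigma+\kappa],\ i\in[0,2p_x-1]\}$ is a basis of $V$.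
   Context: $V^\perp=\{x\in V;(x,V)=0\}$. $Is(V)$ is the group of $g\in GL(V)$ with $(gx,gy)=(x,y)$ and $Q(gx)=Q(x)$ for all $x,y$. A collection of vectors $w^t_i\in V$ ($t\in[1,\sigma+\kappa]$, $i\in\mathbb{Z}$) is $(g,p_* )$-adapted if: (a) $w^t_{i+1}=gw^t_i$ for all $t,i$; (b) for $t\in[1,\sigma]$, $(w^t_i,w^t_j)=0$ if $|i-j|<p_t$ and $(w^t_i,w^t_j)=1$ if $j-i=p_t$; (c) $(w^t_i,w^r_j)=0$ if $0\le i-j+p_r<2p_t$ and $1\le t<r\le\sigma$; (d) if $\kappa=1$, $(w^{\sigma+1}_i,w^{\sigma+1}_i)=2$ for all $i$; (e) if $\kappa=1$, $(w^t_i,w^{\sigma+1}_j)=0$ whenever $0\le i-j<2p_t$ and $1\le t\le\sigma$; (f) $Q(w^t_i)=0$ for $t\in[1,\sigma]$, and $Q(w^{\sigma+1}_i)=1$ if $\kappa=1$. *)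

theory Defs
  imports Main "HOL-Computational_Algebra.Polynomial"
begin

definition alg_closed :: "'k::field itself \<Rightarrow> bool" where
  "alg_closed _ \<longleftrightarrow> (\<forall>f :: 'k poly. degree f > 0 \<longrightarrow> (\<exists>x. poly f x = 0))"

definition bilinear_form :: "('k::field \<Rightarrow> 'v::ab_group_add \<Rightarrow> 'v) \<Rightarrow> ('v \<Rightarrow> 'v \<Rightarrow> 'k) \<Rightarrow> bool" where
  "bilinear_form scale B \<longleftrightarrow>
     (\<forall>x y z. B (x + y) z = B x z + B y z) \<and>
     (\<forall>x y z. B x (y + z) = B x y + B x z) \<and>
     (\<forall>a x y. B (scale a x) y = a * B x y) \<and>
     (\<forall>a x y. B x (scale a y) = a * B x y)"

definition quadratic_form :: "('k::field \<Rightarrow> 'v::ab_group_add \<Rightarrow> 'v) \<Rightarrow> ('v \<Rightarrow> 'k) \<Rightarrow> bool" where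
  "quadratic_form scale Q \<longleftrightarrow>
     (\<forall>a x. Q (scale a x) = a^2 * Q x) \<and>
     bilinear_form scale (\<lambda>x y. Q (x + y) - Q x - Q y)"

definition perp_space :: "('v \<Rightarrow> 'v \<Rightarrow> 'k::zero) \<Rightarrow> 'v set" where
  "perp_space B = {x. \<forall>y. B x y = 0}"

definition isom_group :: "('k::field \<Rightarrow> 'v::ab_group_add \<Rightarrow> 'v) \<Rightarrow> ('v \<Rightarrow> 'v \<Rightarrow> 'k) \<Rightarrow> ('v \<Rightarrow> 'k) \<Rightarrow> ('v \<Rightarrow> 'v) set" where
  "isom_group scale B Q = {g. Vector_Spaces.linear scale scale g \<and> bij g \<and>
      (\<forall>x y. B (g x) (g y) = B x y) \<and> (\<forall>x. Q (g x) = Q x)}"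

definition adapted ::
  "('v \<Rightarrow> 'v \<Rightarrow> 'k::field) \<Rightarrow> ('v \<Rightarrow> 'k) \<Rightarrow> ('v \<Rightarrow> 'v) \<Rightarrow> nat \<Rightarrow> nat \<Rightarrow> (nat \<Rightarrow> nat) \<Rightarrow> (nat \<Rightarrow> int \<Rightarrow> 'v) \<Rightarrow> bool" where
  "adapted B Q g \<sigma> \<kappa> p w \<longleftrightarrow>
     (\<forall>t\<in>{1..\<sigma>+\<kappa>}. \<forall>i. w t (i + 1) = g (w t i)) \<and>
     (\<forall>t\<in>{1..\<sigma>}. \<forall>i j. \<bar>i - j\<bar> < int (p t) \<longrightarrow> B (w t i) (w t j) = 0) \<and>
     (\<forall>t\<in>{1..\<sigma>}. \<forall>i j. j - i = int (p t) \<longrightarrow> B (w t i) (w t j) = 1) \<and>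
     (\<forall>t r i j. 1 \<le> t \<and> t < r \<and> r \<le> \<sigma> \<and> 0 \<le> i - j + int (p r) \<and> i - j + int (p r) < 2 * int (p t)
         \<longrightarrow> B (w t i) (w r j) = 0) \<and>
     (\<kappa> = 1 \<longrightarrow> (\<forall>i. B (w (\<sigma>+1) i) (w (\<sigma>+1) i) = 2)) \<and>
     (\<kappa> = 1 \<longrightarrow> (\<forall>t\<in>{1..\<sigma>}. \<forall>i j. 0 \<le> i - j \<and> i - j < 2 * int (p t) \<longrightarrow> B (w t i) (w (\<sigma>+1) j) = 0)) \<and>
     (\<forall>t\<in>{1..\<sigma>}. \<forall>i. Q (w t i) = 0) \<and>
     (\<kappa> = 1 \<longrightarrow> (\<forall>i. Q (w (\<sigma>+1) i) = 1))"

text \<open>Index set {(x,i). x \<in> [1,sigma+kappa], i \<in> [0, 2 p_x - 1]} with p_(sigma+1) = 1/2.\<close>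
definition adapted_index :: "nat \<Rightarrow> nat \<Rightarrow> (nat \<Rightarrow> nat) \<Rightarrow> (nat \<times> int) set" where
  "adapted_index \<sigma> \<kappa> p =
     {(t, i). 1 \<le> t \<and> t \<le> \<sigma> \<and> 0 \<le> i \<and> i \<le> 2 * int (p t) - 1}
     \<union> (if \<kappa> = 1 then {(\<sigma>+1, 0)} else {})"

end

theory Submission
  imports Defs "HOL-Library.Product_Lexorder"
begin

text \<open>Pair each block vector \<open>w t i\<close>, \<open>0 \<le> i < 2 p t\<close>, with its partner \<open>w t (i \<plusminus> p t)\<close>
  in the other half of its block. Ordering positions by their distance from the centre of their
  block, conditions (b), (c) and (e) make the matrix of these pairings triangular with unit
  diagonal, and \<open>w (\<sigma> + 1) 0\<close> is orthogonal to every partner. So in a vanishing linear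
  combination all block coefficients vanish, and then so does the last one, because
  \<open>Q (w (\<sigma> + 1) 0) = 1\<close> forces \<open>w (\<sigma> + 1) 0 \<noteq> 0\<close> (pairing it with itself gives \<open>2\<close>,
  which may vanish). Counting, the \<open>2 (p 1 + \<dots> + p \<sigma>) + \<kappa> = dim V\<close> independent vectors form a
  basis. Orthogonality is symmetric in both cases (i) and (ii), which matters because (c) is
  one-sided.\<close>

lemma (in vector_space) inj_on_independent_image_if_coeffs_eq_0:
  assumes fin: "finite I"
    and coeffs_zero: "\<And>c. (\<Sum>x\<in>I. c x *s v x) = 0 \<Longrightarrow> \<forall>x\<in>I. c x = 0"
  shows "inj_on v I \<and> independent (v ` I)"
proof
  show inj: "inj_on v I"
  proof (rule inj_onI, rule ccontr)
    fix x y assume x: "x \<in> I" and y: "y \<in> I" and eq: "v x = v y" and ne: "x \<noteq> y"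
    define c :: "_ \<Rightarrow> 'a" where "c = (\<lambda>z. if z = x then 1 else if z = y then - 1 else 0)"
    have "(\<Sum>z\<in>I. c z *s v z) = (\<Sum>z\<in>{x, y}. c z *s v z)"
      by (rule sum.mono_neutral_right) (use fin x y in \<open>auto simp: c_def\<close>)
    also have "\<dots> = v x - v y" using ne by (simp add: c_def)
    finally have "c x = 0" using coeffs_zero x eq by simp
    then show False by (simp add: c_def)
  qed
  show "independent (v ` I)"
  proof (rule independent_if_scalars_zero)
    fix f u assume sum0: "(\<Sum>u\<in>v ` I. f u *s u) = 0" and u: "u \<in> v ` I"
    have "(\<Sum>x\<in>I. f (v x) *s v x) = 0" using sum0 by (simp add: sum.reindex[OF inj])
    obtain x where "x \<in> I" "u = v x" using u by blast
    then show "f u = 0" using coeffs_zero[OF \<open>(\<Sum>x\<in>I. f (v x) *s v x) = 0\<close>] by simp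
  qed (use fin in simp)
qed

lemma (in vector_space) span_eq_UNIV_if_independent_card_eq_dim:
  assumes "finite S" "span S = UNIV" "independent A" "card A = dim UNIV"
  shows "span A = UNIV"
proof -
  obtain Bs where Bs: "independent Bs" "UNIV \<subseteq> span Bs"
    using maximal_independent_subset[of UNIV] by blast
  have "finite Bs" using independent_span_bound[OF assms(1) Bs(1)] assms(2) by auto
  then interpret finite_dimensional_vector_space scale Bs
    by unfold_locales (use Bs in auto)
  have "UNIV \<subseteq> span A"
    by (rule card_ge_dim_independent) (use assms(3,4) in simp_all)
  then show ?thesis by blast
qed

lemma (in vector_space) quadratic_form_zero:
  assumes "quadratic_form scale Q"
  shows "Q 0 = 0"
  using assms unfolding quadratic_form_def by (metis scale_zero_left mult_zero_left zero_power2)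

lemma bilinear_form_zero_left:
  assumes "bilinear_form scale B"
  shows "B 0 y = 0"
proof -
  have "B 0 y + 0 = B 0 y + B 0 y"
    using assms unfolding bilinear_form_def by (metis add.right_neutral)
  then show ?thesis by (simp only: add_left_cancel)
qed

lemma bilinear_form_sum_left:
  assumes "bilinear_form scale B"
  shows "B (\<Sum>x\<in>A. scale (c x) (v x)) y = (\<Sum>x\<in>A. c x * B (v x) y)"
proof (induction A rule: infinite_finite_induct)
  case (insert a A)
  then show ?case using assms unfolding bilinear_form_def by simp
qed (simp_all add: bilinear_form_zero_left[OF assms])

lemma bilinear_form_orthogonal_sym:
  assumes bil: "bilinear_form scale B"
    and "(\<forall>x. B x x = 0) \<or> (\<forall>x y. B x y = B y x)" and "B x y = 0"
  shows "B y x = 0"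
  using assms(2)
proof
  assume alt: "\<forall>x. B x x = 0"
  have "B (x + y) (x + y) = B x x + B x y + (B y x + B y y)"
    using bil unfolding bilinear_form_def by simp
  with alt assms(3) show ?thesis by simp
qed (use assms(3) in metis)

lemma triangular_pairing_coeffs_eq_0:
  fixes key :: "'i \<Rightarrow> 'a::linorder"
  assumes bil: "bilinear_form scale B" and fin: "finite I" and "J \<subseteq> I"
    and sum0: "(\<Sum>x\<in>I. scale (c x) (v x)) = 0"
    and outside: "\<And>x z. x \<in> I - J \<Longrightarrow> z \<in> J \<Longrightarrow> B (v x) (u z) = 0"
    and below: "\<And>x z. x \<in> J \<Longrightarrow> z \<in> J \<Longrightarrow> x \<noteq> z \<Longrightarrow> key x \<le> key z \<Longrightarrow> B (v x) (u z) = 0"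
    and diag: "\<And>z. z \<in> J \<Longrightarrow> B (v z) (u z) \<noteq> 0"
  shows "\<forall>z\<in>J. c z = 0"
proof (rule ccontr)
  let ?A = "{z\<in>J. c z \<noteq> 0}"
  assume "\<not> (\<forall>z\<in>J. c z = 0)"
  then have "?A \<noteq> {}" by auto
  moreover have "finite ?A" using finite_subset[OF \<open>J \<subseteq> I\<close> fin] by simp
  ultimately obtain z where z: "z \<in> J" "c z \<noteq> 0" and top: "\<And>x. x \<in> ?A \<Longrightarrow> key x \<le> key z"
    using Max_in[of "key ` ?A"] Max_ge[of "key ` ?A"] by fastforce
  have "0 = B (\<Sum>x\<in>I. scale (c x) (v x)) (u z)"
    using sum0 bilinear_form_zero_left[OF bil] by simp
  also have "\<dots> = (\<Sum>x\<in>I. c x * B (v x) (u z))"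
    by (rule bilinear_form_sum_left[OF bil])
  also have "\<dots> = c z * B (v z) (u z) + (\<Sum>x\<in>I - {z}. c x * B (v x) (u z))"
    using sum.remove[OF fin] z \<open>J \<subseteq> I\<close> by blast
  also have "(\<Sum>x\<in>I - {z}. c x * B (v x) (u z)) = 0"
  proof (rule sum.neutral, rule ballI)
    fix x assume x: "x \<in> I - {z}"
    show "c x * B (v x) (u z) = 0"
      using outside[of x z] below[of x z] top[of x] x z by (cases "x \<in> J") auto
  qed
  finally show False using z diag by simp
qed

lemma antitone_if_step_antitone:
  fixes p :: "nat \<Rightarrow> nat"
  assumes step: "\<forall>t. 1 \<le> t \<and> t < \<sigma> \<longrightarrow> p (t + 1) \<le> p t" and "1 \<le> t" "t \<le> r" "r \<le> \<sigma>"
  shows "p r \<le> p t"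
  using \<open>t \<le> r\<close> \<open>r \<le> \<sigma>\<close>
proof (induction r rule: dec_induct)
  case (step r)
  then have "p (Suc r) \<le> p r" using assms(1,2) by simp
  with step show ?case by simp
qed simp

definition adapted_block_index :: "nat \<Rightarrow> (nat \<Rightarrow> nat) \<Rightarrow> (nat \<times> int) set" where
  "adapted_block_index \<sigma> p = {(t, i). 1 \<le> t \<and> t \<le> \<sigma> \<and> 0 \<le> i \<and> i < 2 * int (p t)}"

definition block_partner :: "(nat \<Rightarrow> nat) \<Rightarrow> nat \<times> int \<Rightarrow> nat \<times> int" where
  "block_partner p = (\<lambda>(t, i). (t, if i < int (p t) then i + int (p t) else i - int (p t)))"

text \<open>Positions are ranked by their distance from the centre \<open>p t - 1/2\<close> of their block, ties
  broken by \<open>t\<close> (increasing on left halves, decreasing on right halves). Pairing each position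
  with its partner is triangular for this order.\<close>
definition block_key :: "(nat \<Rightarrow> nat) \<Rightarrow> nat \<times> int \<Rightarrow> int \<times> int" where
  "block_key p = (\<lambda>(t, i). (\<bar>2 * i - 2 * int (p t) + 1\<bar>, if i < int (p t) then int t else - int t))"

lemma adapted_index_eq:
  "adapted_index \<sigma> \<kappa> p = adapted_block_index \<sigma> p \<union> (if \<kappa> = 1 then {(\<sigma> + 1, 0)} else {})"
  unfolding adapted_index_def adapted_block_index_def by auto

lemma adapted_block_index_eq_Sigma:
  "adapted_block_index \<sigma> p = Sigma {1..\<sigma>} (\<lambda>t. {0..<2 * int (p t)})"
  unfolding adapted_block_index_def by auto

lemma finite_adapted_index: "finite (adapted_index \<sigma> \<kappa> p)"
  by (simp add: adapted_index_eq adapted_block_index_eq_Sigma)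

lemma card_adapted_index:
  assumes "\<kappa> \<in> {0, 1}"
  shows "card (adapted_index \<sigma> \<kappa> p) = 2 * (\<Sum>t=1..\<sigma>. p t) + \<kappa>"
proof -
  have "card (adapted_block_index \<sigma> p) = (\<Sum>t=1..\<sigma>. 2 * p t)"
    by (simp add: adapted_block_index_eq_Sigma card_SigmaI nat_mult_distrib)
  moreover have "(\<sigma> + 1, 0) \<notin> adapted_block_index \<sigma> p"
    by (simp add: adapted_block_index_def)
  ultimately show ?thesis using assms
    by (auto simp: adapted_index_eq sum_distrib_left adapted_block_index_eq_Sigma)
qed

lemma block_key_le_imp_orthogonal_position:
  fixes p :: "nat \<Rightarrow> nat"
  assumes x: "(t, i) \<in> adapted_block_index \<sigma> p" and z: "z \<in> adapted_block_index \<sigma> p"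
    and "(t, i) \<noteq> z" and "block_key p (t, i) \<le> block_key p z"
    and antitone: "\<And>t r. 1 \<le> t \<Longrightarrow> t \<le> r \<Longrightarrow> r \<le> \<sigma> \<Longrightarrow> p r \<le> p t"
    and pos: "\<And>t. t \<in> {1..\<sigma>} \<Longrightarrow> 1 \<le> p t"
    and partner: "block_partner p z = (r, j)"
  shows "t = r \<and> \<bar>i - j\<bar> < int (p t)
    \<or> t < r \<and> 0 \<le> i - j + int (p r) \<and> i - j + int (p r) < 2 * int (p t)
    \<or> r < t \<and> 0 \<le> j - i + int (p t) \<and> j - i + int (p t) < 2 * int (p r)"
proof -
  obtain b where zb: "z = (r, b)" and j: "j = (if b < int (p r) then b + int (p r) else b - int (p r))"
    using partner by (cases z) (auto simp: block_partner_def)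
  have rng: "1 \<le> t" "t \<le> \<sigma>" "0 \<le> i" "i < 2 * int (p t)" "1 \<le> r" "r \<le> \<sigma>" "0 \<le> b" "b < 2 * int (p r)"
    using x z unfolding zb adapted_block_index_def by auto
  have "1 \<le> int (p t)" "1 \<le> int (p r)" using pos rng by force+
  moreover have "t < r \<Longrightarrow> int (p r) \<le> int (p t)" "r < t \<Longrightarrow> int (p t) \<le> int (p r)"
    using antitone rng by simp_all
  moreover have "(t, i) \<noteq> (r, b)" "block_key p (t, i) \<le> block_key p (r, b)" using assms zb by auto
  ultimately show ?thesis using rng j
    by (cases t r rule: linorder_cases)
       (simp_all split: if_splits add: block_key_def less_eq_prod_def abs_if; arith)+
qed

lemma adaptedD:
  assumes "adapted B Q g \<sigma> \<kappa> p w"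
  shows adapted_orthogonal_near:
      "\<And>t i j. t \<in> {1..\<sigma>} \<Longrightarrow> \<bar>i - j\<bar> < int (p t) \<Longrightarrow> B (w t i) (w t j) = 0"
    and adapted_pairing_one: "\<And>t i. t \<in> {1..\<sigma>} \<Longrightarrow> B (w t i) (w t (i + int (p t))) = 1"
    and adapted_orthogonal_cross: "\<And>t r i j. 1 \<le> t \<Longrightarrow> t < r \<Longrightarrow> r \<le> \<sigma> \<Longrightarrow>
      0 \<le> i - j + int (p r) \<Longrightarrow> i - j + int (p r) < 2 * int (p t) \<Longrightarrow> B (w t i) (w r j) = 0"
    and adapted_orthogonal_anisotropic: "\<And>t i j. \<kappa> = 1 \<Longrightarrow> t \<in> {1..\<sigma>} \<Longrightarrow>
      0 \<le> i - j \<Longrightarrow> i - j < 2 * int (p t) \<Longrightarrow> B (w t i) (w (\<sigma> + 1) j) = 0"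
    and adapted_anisotropic_Q: "\<kappa> = 1 \<Longrightarrow> Q (w (\<sigma> + 1) 0) = 1"
  using assms unfolding adapted_def by auto

context
  fixes scale :: "'k::field \<Rightarrow> 'v::ab_group_add \<Rightarrow> 'v" and B :: "'v \<Rightarrow> 'v \<Rightarrow> 'k"
    and \<sigma> \<kappa> :: nat and p :: "nat \<Rightarrow> nat" and w :: "nat \<Rightarrow> int \<Rightarrow> 'v"
  assumes bil: "bilinear_form scale B"
    and orth_sym: "\<And>x y. B x y = 0 \<Longrightarrow> B y x = 0"
    and antitone: "\<And>t r. 1 \<le> t \<Longrightarrow> t \<le> r \<Longrightarrow> r \<le> \<sigma> \<Longrightarrow> p r \<le> p t"
    and pos: "\<And>t. t \<in> {1..\<sigma>} \<Longrightarrow> 1 \<le> p t"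
    and near: "\<And>t i j. t \<in> {1..\<sigma>} \<Longrightarrow> \<bar>i - j\<bar> < int (p t) \<Longrightarrow> B (w t i) (w t j) = 0"
    and one: "\<And>t i. t \<in> {1..\<sigma>} \<Longrightarrow> B (w t i) (w t (i + int (p t))) = 1"
    and cross: "\<And>t r i j. 1 \<le> t \<Longrightarrow> t < r \<Longrightarrow> r \<le> \<sigma> \<Longrightarrow>
      0 \<le> i - j + int (p r) \<Longrightarrow> i - j + int (p r) < 2 * int (p t) \<Longrightarrow> B (w t i) (w r j) = 0"
    and anisotropic: "\<And>t i j. \<kappa> = 1 \<Longrightarrow> t \<in> {1..\<sigma>} \<Longrightarrow>
      0 \<le> i - j \<Longrightarrow> i - j < 2 * int (p t) \<Longrightarrow> B (w t i) (w (\<sigma> + 1) j) = 0"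
    and anisotropic_nonzero: "\<kappa> = 1 \<Longrightarrow> w (\<sigma> + 1) 0 \<noteq> 0"
begin

lemma pairing_below_key_eq_0:
  assumes "x \<in> adapted_block_index \<sigma> p" "z \<in> adapted_block_index \<sigma> p" "x \<noteq> z"
    and "block_key p x \<le> block_key p z"
  shows "B (case_prod w x) (case_prod w (block_partner p z)) = 0"
proof -
  obtain t i r j where x: "x = (t, i)" and z: "block_partner p z = (r, j)"
    by (cases x, cases "block_partner p z")
  have t: "t \<in> {1..\<sigma>}" and r: "r \<in> {1..\<sigma>}"
    using assms(1,2) z unfolding x adapted_block_index_def block_partner_def by (auto split: prod.splits)
  from block_key_le_imp_orthogonal_position[OF assms(1-4)[unfolded x] antitone pos z]
  consider "t = r" "\<bar>i - j\<bar> < int (p t)"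
    | "t < r" "0 \<le> i - j + int (p r)" "i - j + int (p r) < 2 * int (p t)"
    | "r < t" "0 \<le> j - i + int (p t)" "j - i + int (p t) < 2 * int (p r)"
    by blast
  then have "B (w t i) (w r j) = 0"
  proof cases
    case 1
    then show ?thesis using near t by simp
  next
    case 2
    then show ?thesis using cross t r by simp
  next
    case 3
    then have "B (w r j) (w t i) = 0" using cross t r by simp
    then show ?thesis by (rule orth_sym)
  qed
  then show ?thesis by (simp add: x z)
qed

lemma pairing_partner_neq_0:
  assumes "z \<in> adapted_block_index \<sigma> p"
  shows "B (case_prod w z) (case_prod w (block_partner p z)) \<noteq> 0"
proof -
  obtain r b where z: "z = (r, b)" and r: "r \<in> {1..\<sigma>}"
    using assms unfolding adapted_block_index_def by auto
  show ?thesis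
    using one[OF r, of b] one[OF r, of "b - int (p r)"] orth_sym[of "w r b" "w r (b - int (p r))"]
    by (auto simp: z block_partner_def)
qed

lemma pairing_anisotropic_partner_eq_0:
  assumes "\<kappa> = 1" "z \<in> adapted_block_index \<sigma> p"
  shows "B (w (\<sigma> + 1) 0) (case_prod w (block_partner p z)) = 0"
proof -
  obtain r j where z: "block_partner p z = (r, j)" by (cases "block_partner p z")
  have "r \<in> {1..\<sigma>}" "0 \<le> j" "j < 2 * int (p r)"
    using assms(2) z unfolding adapted_block_index_def block_partner_def by (auto split: if_splits)
  then have "B (w r j) (w (\<sigma> + 1) 0) = 0" using anisotropic assms(1) by simp
  then show ?thesis by (simp add: z orth_sym)
qed

lemma adapted_index_coeffs_eq_0:
  assumes "vector_space scale"
    and sum0: "(\<Sum>x\<in>adapted_index \<sigma> \<kappa> p. scale (c x) (case_prod w x)) = 0"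
  shows "\<forall>x\<in>adapted_index \<sigma> \<kappa> p. c x = 0"
proof -
  interpret vector_space scale by fact
  let ?J = "adapted_block_index \<sigma> p"
  have block: "\<forall>z\<in>?J. c z = 0"
  proof (rule triangular_pairing_coeffs_eq_0[OF bil finite_adapted_index _ sum0, where key = "block_key p"])
    show "?J \<subseteq> adapted_index \<sigma> \<kappa> p" by (simp add: adapted_index_eq)
    show "B (case_prod w x) (case_prod w (block_partner p z)) = 0"
      if "x \<in> adapted_index \<sigma> \<kappa> p - ?J" "z \<in> ?J" for x z
      using that pairing_anisotropic_partner_eq_0[OF _ that(2)]
      by (auto simp: adapted_index_eq split: if_splits)
  qed (use pairing_below_key_eq_0 pairing_partner_neq_0 in blast)+
  show ?thesis
  proof (cases "\<kappa> = 1")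
    case True
    have "adapted_index \<sigma> \<kappa> p = insert (\<sigma> + 1, 0) ?J" "(\<sigma> + 1, 0) \<notin> ?J"
      using True by (auto simp: adapted_index_eq adapted_block_index_def)
    then have "scale (c (\<sigma> + 1, 0)) (w (\<sigma> + 1) 0) = 0"
      using sum0 block finite_adapted_index[of \<sigma> \<kappa> p] by simp
    then show ?thesis using block True anisotropic_nonzero by (auto simp: adapted_index_eq)
  qed (use block in \<open>simp add: adapted_index_eq\<close>)
qed

end

theorem mainTheorem3:
  fixes scale :: "'k::field \<Rightarrow> 'v::ab_group_add \<Rightarrow> 'v"
    and B :: "'v \<Rightarrow> 'v \<Rightarrow> 'k" and Q :: "'v \<Rightarrow> 'k"
    and N \<kappa> n \<sigma> :: nat and p :: "nat \<Rightarrow> nat"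
    and g :: "'v \<Rightarrow> 'v" and w :: "nat \<Rightarrow> int \<Rightarrow> 'v"
  assumes "alg_closed TYPE('k)"
    and "vector_space scale"
    and "\<exists>S. finite S \<and> module.span scale S = UNIV"
    and "vector_space.dim scale (UNIV :: 'v set) = N"
    and "N \<ge> 3"
    and "bilinear_form scale B"
    and "quadratic_form scale Q"
    and "(Q = (\<lambda>_. 0) \<and> (\<forall>x. B x x = 0) \<and> perp_space B = {0})
         \<or> (Q \<noteq> (\<lambda>_. 0) \<and> (\<forall>x y. B x y = Q (x + y) - Q x - Q y) \<and> inj_on Q (perp_space B))"
    and "\<kappa> \<in> {0, 1}"
    and "even (N - \<kappa>)"
    and "n = (N - \<kappa>) div 2"
    and "\<forall>t. 1 \<le> t \<and> t < \<sigma> \<longrightarrow> p t \<ge> p (t + 1)"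
    and "\<forall>t\<in>{1..\<sigma>}. p t \<ge> 1"
    and "(\<Sum>t=1..\<sigma>. p t) = n"
    and "g \<in> isom_group scale B Q"
    and "adapted B Q g \<sigma> \<kappa> p w"
  shows "inj_on (\<lambda>(t, i). w t i) (adapted_index \<sigma> \<kappa> p)
         \<and> \<not> module.dependent scale ((\<lambda>(t, i). w t i) ` adapted_index \<sigma> \<kappa> p)
         \<and> module.span scale ((\<lambda>(t, i). w t i) ` adapted_index \<sigma> \<kappa> p) = UNIV"
proof -
  interpret V: vector_space scale by fact
  let ?I = "adapted_index \<sigma> \<kappa> p" and ?W = "\<lambda>(t, i). w t i"
  have "(\<forall>x. B x x = 0) \<or> (\<forall>x y. B x y = B y x)"
    using assms(8) by (auto simp: add.commute)
  then have orth_sym: "\<And>x y. B x y = 0 \<Longrightarrow> B y x = 0"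
    by (rule bilinear_form_orthogonal_sym[OF assms(6)])
  have antitone: "\<And>t r. 1 \<le> t \<Longrightarrow> t \<le> r \<Longrightarrow> r \<le> \<sigma> \<Longrightarrow> p r \<le> p t"
    using antitone_if_step_antitone[OF assms(12)] by blast
  have pos: "\<And>t. t \<in> {1..\<sigma>} \<Longrightarrow> 1 \<le> p t" using assms(13) by blast
  have nonzero: "\<kappa> = 1 \<Longrightarrow> w (\<sigma> + 1) 0 \<noteq> 0"
    using adapted_anisotropic_Q[OF assms(16)] V.quadratic_form_zero[OF assms(7)] by force
  have "\<forall>x\<in>?I. c x = 0" if "(\<Sum>x\<in>?I. scale (c x) (?W x)) = 0" for c
    by (rule adapted_index_coeffs_eq_0[OF assms(6) orth_sym antitone pos
          adaptedD(1-4)[OF assms(16)] nonzero assms(2) that])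
  then have indep: "inj_on ?W ?I \<and> V.independent (?W ` ?I)"
    by (rule V.inj_on_independent_image_if_coeffs_eq_0[OF finite_adapted_index])
  have "card ?I = 2 * n + \<kappa>"
    using card_adapted_index[OF assms(9)] assms(14) by simp
  also have "\<dots> = N"
    using assms(5,9,10,11) by auto
  finally have "card (?W ` ?I) = V.dim UNIV"
    using card_image[of ?W ?I] indep assms(4) by simp
  moreover obtain S where "finite S" "V.span S = UNIV" using assms(3) by blast
  ultimately show ?thesis
    using indep V.span_eq_UNIV_if_independent_card_eq_dim by blast
qed

end
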